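(* Let $n,k\ge 0$ be integers, let $\mathbb{P}^{(n)}=\{I,X,Y,Z\}^{\otimes n}$ be the $n$-qubit Pauli operators (modulo phase), and let $\mathcal{T}_P^{(k)}$ be the multi-time Pauli twirl acting on operators $\Upsilon$ on $\mathcal{H}_{\Upsilon_{0:k}}=\bigotimes_{j=0}^k(\mathcal{H}_{\mathfrak{i}_j}\otimes\mathcal{H}_{\mathfrak{o}_j})$ (each factor an $n$-qubit space) by \[ \mathcal{T}_P^{(k)}(\Upsilon)=\frac{1}{|\mathbb{P}^{(n)}|^{k+1}}\sum_{P_0,\dots,P_k\in\mathbb{P}^{(n)}}\Big(\bigotimes_{j=0}^k P_j\otimes P_j\Big)\,\Upsilon\,\Big(\bigotimes_{j=0}^k P_j\otimes P_j\Big), \] where in the $j$-th factor the first $P_j$ acts on $\mathcal{H}_{\mathfrak{i}_j}$ and the second on $\mathcal{H}_{\mathfrak{o}_j}$. Then: (1) (Validity) for every Choi operator $\Upsilon_{0:k}$ of a valid (CPTP) $k$-slot process tensor, $\mathcal{T}_P^{(k)}(\Upsilon_{0:k})$ is again the Choi operator of a valid (CPTP) $k$-slot process tensor; (2) (Projector) $\mathcal{T}_P^{(k)}\circ\mathcal{T}_P^{(k)}=\mathcal{T}_P^{(k)}$; (3) (Causality) the causal (affine) constraints are preserved: if $\Upsilon_{0:k}$ satisfies the causal constraints below, so does $\mathcal{T}_P^{(k)}(\Upsilon_{0:k})$.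
   Context: A $k$-slot process tensor is described by its Choi operator $\Upsilon_{0:k}$, a linear operator on $\mathcal{H}_{\Upsilon_{0:k}}=\bigotimes_{j=0}^k(\mathcal{H}_{\mathfrak{i}_j}\otimes\mathcal{H}_{\mathfrak{o}_j})$, where $\mathcal{H}_{\mathfrak{i}_j},\mathcal{H}_{\mathfrak{o}_j}$ are the system input/output spaces at time step $j$. It is valid (CPTP) iff $\Upsilon_{0:k}\ge 0$ and it satisfies the causal constraints: there are operators $\Upsilon_{0:j}$ on $\bigotimes_{l=0}^{j}(\mathcal{H}_{\mathfrak{i}_l}\otimes\mathcal{H}_{\mathfrak{o}_l})$, $j=0,\dots,k$ (with $\Upsilon_{0:k}$ the given operator), such that $\mathrm{Tr}_{\mathfrak{o}_j}[\Upsilon_{0:j}]=\Upsilon_{0:j-1}\otimes\mathbb{I}_{\mathfrak{i}_j}$ for $j=1,\dots,k$ and $\mathrm{Tr}_{\mathfrak{o}_0}[\Upsilon_{0:0}]=\mathbb{I}_{\mathfrak{i}_0}$. Choi operators use the unnormalised maximally entangled vector $\sum_i|i\rangle|i\rangle$. *)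

theory Defs
  imports Complex_Main "Jordan_Normal_Form.Matrix" "Jordan_Normal_Form.Conjugate"
begin

text \<open>Kronecker (tensor) product of matrices; the first factor is the most significant one.\<close>
definition kron :: "complex mat \<Rightarrow> complex mat \<Rightarrow> complex mat" where
  "kron A B = mat (dim_row A * dim_row B) (dim_col A * dim_col B)
     (\<lambda>(i,j). A $$ (i div dim_row B, j div dim_col B) * B $$ (i mod dim_row B, j mod dim_col B))"

definition ptrace_last :: "nat \<Rightarrow> complex mat \<Rightarrow> complex mat" where
  "ptrace_last d A = mat (dim_row A div d) (dim_col A div d)
     (\<lambda>(i,j). \<Sum>l<d. A $$ (i * d + l, j * d + l))"

definition psd :: "complex mat \<Rightarrow> bool" where
  "psd A \<longleftrightarrow> (\<exists>m. A \<in> carrier_mat m m \<and>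
     (\<forall>v \<in> carrier_vec m. (conjugate v \<bullet> (A *\<^sub>v v)) \<in> \<real> \<and> 0 \<le> Re ((conjugate v \<bullet> (A *\<^sub>v v)))))"

text \<open>Single-qubit Paulis: 0 = I, 1 = X, 2 = Y, 3 = Z.\<close>
definition pauli1 :: "nat \<Rightarrow> complex mat" where
  "pauli1 p = (if p = 0 then mat_of_rows_list 2 [[1,0],[0,1]]
     else if p = 1 then mat_of_rows_list 2 [[0,1],[1,0]]
     else if p = 2 then mat_of_rows_list 2 [[0,-\<i>],[\<i>,0]]
     else mat_of_rows_list 2 [[1,0],[0,-1]])"

definition pauli_string :: "nat list \<Rightarrow> complex mat" where
  "pauli_string ps = foldr (\<lambda>p M. kron (pauli1 p) M) ps (1\<^sub>m 1)"

text \<open>The n-qubit Pauli operators (one representative per phase class).\<close>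
definition paulis :: "nat \<Rightarrow> complex mat set" where
  "paulis n = {pauli_string ps | ps. length ps = n \<and> set ps \<subseteq> {..<4}}"

text \<open>Qubit dimension of one system space, and of H_{Upsilon_{0:j}}
  = (H_i0 (x) H_o0) (x) ... (x) (H_ij (x) H_oj).\<close>
definition sysdim :: "nat \<Rightarrow> nat" where "sysdim n = 2 ^ n"
definition ptdim :: "nat \<Rightarrow> nat \<Rightarrow> nat" where
  "ptdim n j = (sysdim n * sysdim n) ^ (Suc j)"

definition twirl_op :: "complex mat list \<Rightarrow> complex mat" where
  "twirl_op Ps = foldr (\<lambda>P M. kron (kron P P) M) Ps (1\<^sub>m 1)"

definition pauli_twirl :: "nat \<Rightarrow> nat \<Rightarrow> complex mat \<Rightarrow> complex mat" where
  "pauli_twirl n k U = mat (ptdim n k) (ptdim n k) (\<lambda>(a,b).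
     (1 / of_nat (card (paulis n) ^ Suc k)) *
     (\<Sum>Ps \<in> {Ps. length Ps = Suc k \<and> set Ps \<subseteq> paulis n}.
        (twirl_op Ps * U * twirl_op Ps) $$ (a,b)))"

definition causal :: "nat \<Rightarrow> nat \<Rightarrow> complex mat \<Rightarrow> bool" where
  "causal n k U \<longleftrightarrow> (\<exists>Ups :: nat \<Rightarrow> complex mat.
     Ups k = U \<and>
     (\<forall>j\<le>k. Ups j \<in> carrier_mat (ptdim n j) (ptdim n j)) \<and>
     ptrace_last (sysdim n) (Ups 0) = 1\<^sub>m (sysdim n) \<and>
     (\<forall>j. 1 \<le> j \<and> j \<le> k \<longrightarrow>
        ptrace_last (sysdim n) (Ups j) = kron (Ups (j - 1)) (1\<^sub>m (sysdim n))))"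

definition valid_process_tensor :: "nat \<Rightarrow> nat \<Rightarrow> complex mat \<Rightarrow> bool" where
  "valid_process_tensor n k U \<longleftrightarrow> psd U \<and> causal n k U"

end

theory Submission
  imports Defs
begin

text \<open>Write \<open>T\<^sub>P = \<Otimes>\<^sub>j P\<^sub>j \<otimes> P\<^sub>j\<close> for a list \<open>P\<close> of Pauli strings. For Paulis \<open>Q P = c R\<close> and
  \<open>P Q = c' R\<close> with \<open>c c' = 1\<close>, so \<open>T\<^sub>Q T\<^sub>P U T\<^sub>P T\<^sub>Q = T\<^sub>R U T\<^sub>R\<close>, and \<open>P \<mapsto> R\<close> is a bijection of
  the Pauli group modulo phases. Conjugating the twirl by \<open>T\<^sub>Q\<close> therefore only permutes its summands,
  which gives idempotence. Each summand \<open>T U T\<close> is positive semidefinite because \<open>T\<close> is Hermitian.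
  For causality, tracing out the last output space from \<open>(X \<otimes> P) V (X \<otimes> P)\<close> with \<open>P\<^sup>2 = 1\<close> leaves
  \<open>X (Tr\<^sub>o V) X\<close>; if \<open>Tr\<^sub>o V = B \<otimes> 1\<close> and \<open>X = T \<otimes> P\<close> this is \<open>T B T \<otimes> 1\<close>, so the twirl of
  \<open>\<Upsilon>\<^sub>0\<^sub>:\<^sub>j\<close> has partial trace the twirl of \<open>\<Upsilon>\<^sub>0\<^sub>:\<^sub>j\<^sub>-\<^sub>1\<close> tensored with the identity.\<close>

lemma sum_lessThan_mult:
  "(\<Sum>x<m * d. f x) = (\<Sum>a<m. \<Sum>b<d. f (a * d + b :: nat))"
  unfolding sum.nat_group[symmetric]
  by (rule sum.cong[OF refl]) (simp add: sum.shift_bounds_nat_ivl[of f 0 _ d, simplified] atLeast0LessThan add.commute)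

lemma mult_add_less_mult: "a < m \<Longrightarrow> b < d \<Longrightarrow> a * d + b < m * (d :: nat)"
proof -
  assume "a < m" "b < d"
  then have "a * d + b < Suc a * d" by simp
  also have "\<dots> \<le> m * d" using \<open>a < m\<close> by (intro mult_le_mono1) simp
  finally show ?thesis .
qed

lemma div_mod_less_mult: "i < a * b \<Longrightarrow> i div b < a \<and> i mod (b :: nat) < b"
  by (cases "b = 0") (auto simp: less_mult_imp_div_less)

lemma index_mult_mat_sum:
  "A \<in> carrier_mat m n \<Longrightarrow> B \<in> carrier_mat n p \<Longrightarrow> i < m \<Longrightarrow> j < p \<Longrightarrow>
   (A * B) $$ (i, j) = (\<Sum>x<n. A $$ (i, x) * B $$ (x, j))"
  by (simp add: scalar_prod_def lessThan_atLeast0)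

lemma index_mult_mat_vec_sum:
  "A \<in> carrier_mat m n \<Longrightarrow> v \<in> carrier_vec n \<Longrightarrow> i < m \<Longrightarrow> (A *\<^sub>v v) $ i = (\<Sum>j<n. A $$ (i, j) * v $ j)"
  by (simp add: scalar_prod_def lessThan_atLeast0)

lemma index_mult3_mat_sum:
  assumes A: "A \<in> carrier_mat m n" and B: "B \<in> carrier_mat n p" and C: "C \<in> carrier_mat p q"
    and "i < m" "j < q"
  shows "(A * B * C) $$ (i, j) = (\<Sum>x<n. \<Sum>y<p. A $$ (i, x) * B $$ (x, y) * C $$ (y, j))"
proof -
  have "(A * B * C) $$ (i, j) = (\<Sum>y<p. (A * B) $$ (i, y) * C $$ (y, j))"
    using assms by (intro index_mult_mat_sum[OF mult_carrier_mat[OF A B] C])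
  also have "\<dots> = (\<Sum>y<p. (\<Sum>x<n. A $$ (i, x) * B $$ (x, y)) * C $$ (y, j))"
    using assms by (intro sum.cong refl) (simp only: index_mult_mat_sum[OF A B] lessThan_iff)
  also have "\<dots> = (\<Sum>x<n. \<Sum>y<p. A $$ (i, x) * B $$ (x, y) * C $$ (y, j))"
    by (simp add: sum_distrib_right sum.swap[of _ "{..<p}"])
  finally show ?thesis .
qed

lemma smult_smult_mat: "a \<cdot>\<^sub>m (b \<cdot>\<^sub>m A) = (a * b :: 'a :: semigroup_mult) \<cdot>\<^sub>m A"
  by (rule eq_matI) (auto simp: mult.assoc)

lemma one_smult_mat [simp]: "(1 :: 'a :: monoid_mult) \<cdot>\<^sub>m A = A"
  by (rule eq_matI) auto

definition mat_trace :: "complex mat \<Rightarrow> complex" where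
  "mat_trace A = (\<Sum>i<dim_row A. A $$ (i, i))"

lemma mat_trace_one [simp]: "mat_trace (1\<^sub>m n) = of_nat n"
  by (simp add: mat_trace_def)

lemma mat_trace_smult: "A \<in> carrier_mat n n \<Longrightarrow> mat_trace (c \<cdot>\<^sub>m A) = c * mat_trace A"
  unfolding mat_trace_def by (auto simp: sum_distrib_left)

definition hermitian :: "complex mat \<Rightarrow> bool" where
  "hermitian A \<longleftrightarrow> (\<forall>i < dim_row A. \<forall>j < dim_row A. A $$ (i, j) = cnj (A $$ (j, i)))"

lemma hermitian_one_mat: "hermitian (1\<^sub>m n)"
  unfolding hermitian_def by auto

section \<open>Kronecker products\<close>

lemma kron_dims [simp]:
  "dim_row (kron A B) = dim_row A * dim_row B" "dim_col (kron A B) = dim_col A * dim_col B"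
  unfolding kron_def by simp_all

lemma kron_carrier_mat:
  "A \<in> carrier_mat a b \<Longrightarrow> B \<in> carrier_mat c d \<Longrightarrow> kron A B \<in> carrier_mat (a * c) (b * d)"
  by (intro carrier_matI) auto

lemma index_kron [simp]:
  "i < dim_row A * dim_row B \<Longrightarrow> j < dim_col A * dim_col B \<Longrightarrow>
   kron A B $$ (i, j) = A $$ (i div dim_row B, j div dim_col B) * B $$ (i mod dim_row B, j mod dim_col B)"
  unfolding kron_def by simp

lemma index_kron_block:
  assumes "X \<in> carrier_mat m m'" "P \<in> carrier_mat d d'"
    and "i < m" "l < d" "j < m'" "l' < d'"
  shows "kron X P $$ (i * d + l, j * d' + l') = X $$ (i, j) * P $$ (l, l')"
  using assms mult_add_less_mult[of i m l d] mult_add_less_mult[of j m' l' d'] by simp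

lemma kron_mult_kron:
  assumes A: "A \<in> carrier_mat a1 a2" and B: "B \<in> carrier_mat b1 b2"
    and C: "C \<in> carrier_mat a2 a3" and D: "D \<in> carrier_mat b2 b3"
  shows "kron A B * kron C D = kron (A * C) (B * D)"
proof (rule eq_matI)
  fix i j assume "i < dim_row (kron (A * C) (B * D))" "j < dim_col (kron (A * C) (B * D))"
  then have i: "i < a1 * b1" and j: "j < a3 * b3" using A B C D by auto
  then have i': "i div b1 < a1" "i mod b1 < b1" and j': "j div b3 < a3" "j mod b3 < b3"
    by (simp_all add: div_mod_less_mult)
  have "(kron A B * kron C D) $$ (i, j) = (\<Sum>x<a2 * b2. kron A B $$ (i, x) * kron C D $$ (x, j))"
    using i j by (rule index_mult_mat_sum[OF kron_carrier_mat[OF A B] kron_carrier_mat[OF C D]])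
  also have "\<dots> = (\<Sum>x<a2. \<Sum>y<b2. (A $$ (i div b1, x) * C $$ (x, j div b3)) *
                                    (B $$ (i mod b1, y) * D $$ (y, j mod b3)))"
    unfolding sum_lessThan_mult
  proof (intro sum.cong refl)
    fix x y assume x: "x \<in> {..<a2}" and y: "y \<in> {..<b2}"
    then have "x * b2 + y < a2 * b2" by (simp add: mult_add_less_mult)
    then have "kron A B $$ (i, x * b2 + y) = A $$ (i div b1, x) * B $$ (i mod b1, y)"
      and "kron C D $$ (x * b2 + y, j) = C $$ (x, j div b3) * D $$ (y, j mod b3)"
      using A B C D i j x y by simp_all
    then show "kron A B $$ (i, x * b2 + y) * kron C D $$ (x * b2 + y, j) =
      (A $$ (i div b1, x) * C $$ (x, j div b3)) * (B $$ (i mod b1, y) * D $$ (y, j mod b3))"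
      by (simp only: mult_ac)
  qed
  also have "\<dots> = kron (A * C) (B * D) $$ (i, j)"
    using A B C D i j i' j' by (simp add: scalar_prod_def lessThan_atLeast0 sum_product)
  finally show "(kron A B * kron C D) $$ (i, j) = kron (A * C) (B * D) $$ (i, j)" .
qed (use A B C D in auto)

lemma kron_assoc: "kron (kron A B) C = kron A (kron B C)"
proof (rule eq_matI)
  fix i j assume "i < dim_row (kron A (kron B C))" "j < dim_col (kron A (kron B C))"
  let ?rB = "dim_row B" and ?rC = "dim_row C" and ?cB = "dim_col B" and ?cC = "dim_col C"
  have i: "i < dim_row A * (?rB * ?rC)" and j: "j < dim_col A * (?cB * ?cC)"
    using \<open>i < _\<close> \<open>j < _\<close> by (simp_all only: kron_dims)
  have pos: "0 < ?rB * ?rC" "0 < ?rC" "0 < ?cB * ?cC" "0 < ?cC"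
    using i j by (metis less_nat_zero_code mult_0_right mult_0 neq0_conv)+
  have split: "i div (b * c) = i div c div b" "i mod (b * c) div c = i div c mod b"
    "i mod (b * c) mod c = i mod c" if "0 < c" for i b c :: nat
    using that by (simp_all add: div_mult2_eq mult.commute[of b c] mod_mult2_eq)
  have "i div ?rC < dim_row A * ?rB" "j div ?cC < dim_col A * ?cB"
    using div_mod_less_mult[of i "dim_row A * ?rB" ?rC] div_mod_less_mult[of j "dim_col A * ?cB" ?cC]
      i j by (simp_all only: mult.assoc)
  then have L: "kron (kron A B) C $$ (i, j) =
      A $$ (i div ?rC div ?rB, j div ?cC div ?cB) * B $$ (i div ?rC mod ?rB, j div ?cC mod ?cB)
      * C $$ (i mod ?rC, j mod ?cC)"
    using i j by (simp only: index_kron kron_dims mult.assoc)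
  have "kron A (kron B C) $$ (i, j) =
      A $$ (i div (?rB * ?rC), j div (?cB * ?cC)) * (B $$ (i mod (?rB * ?rC) div ?rC, j mod (?cB * ?cC) div ?cC)
      * C $$ (i mod (?rB * ?rC) mod ?rC, j mod (?cB * ?cC) mod ?cC))"
    using i j mod_less_divisor[OF pos(1), of i] mod_less_divisor[OF pos(3), of j]
    by (simp only: index_kron kron_dims)
  then show "kron (kron A B) C $$ (i, j) = kron A (kron B C) $$ (i, j)"
    unfolding L split[OF pos(2)] split[OF pos(4)] by (simp only: mult.assoc)
qed (simp_all only: kron_dims mult.assoc)

lemma kron_unit_left [simp]: "kron (1\<^sub>m 1) A = A"
  by (rule eq_matI) auto

lemma kron_unit_right [simp]: "kron A (1\<^sub>m 1) = A"
  by (rule eq_matI) auto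

lemma kron_smult_left: "kron (c \<cdot>\<^sub>m A) B = c \<cdot>\<^sub>m kron A B"
  by (rule eq_matI) (auto dest!: div_mod_less_mult)

lemma kron_smult_right: "kron A (c \<cdot>\<^sub>m B) = c \<cdot>\<^sub>m kron A B"
  by (rule eq_matI) (auto dest!: div_mod_less_mult)

lemma kron_one_mat: "kron (1\<^sub>m a) (1\<^sub>m b) = 1\<^sub>m (a * b)"
proof (rule eq_matI)
  fix i j assume "i < dim_row (1\<^sub>m (a * b))" "j < dim_col (1\<^sub>m (a * b))"
  then have ij: "i < a * b" "j < a * b" by auto
  then have "i div b < a" "i mod b < b" "j div b < a" "j mod b < b"
    by (simp_all add: div_mod_less_mult)
  moreover have "i div b = j div b \<and> i mod b = j mod b \<longleftrightarrow> i = j"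
    by (metis div_mult_mod_eq)
  ultimately show "kron (1\<^sub>m a) (1\<^sub>m b) $$ (i, j) = 1\<^sub>m (a * b) $$ (i, j)"
    using ij by auto
qed auto

lemma mat_trace_kron:
  assumes "A \<in> carrier_mat a a" "B \<in> carrier_mat b b"
  shows "mat_trace (kron A B) = mat_trace A * mat_trace B"
proof -
  have "mat_trace (kron A B) = (\<Sum>x<a * b. kron A B $$ (x, x))"
    using assms by (simp add: mat_trace_def)
  also have "\<dots> = (\<Sum>x<a. \<Sum>y<b. A $$ (x, x) * B $$ (y, y))"
    unfolding sum_lessThan_mult using assms by (intro sum.cong refl) (simp add: index_kron_block)
  also have "\<dots> = mat_trace A * mat_trace B"
    using assms by (simp add: mat_trace_def sum_product)
  finally show ?thesis .
qed

lemma hermitian_kron: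
  assumes A: "A \<in> carrier_mat a a" and B: "B \<in> carrier_mat b b"
    and hA: "hermitian A" and hB: "hermitian B"
  shows "hermitian (kron A B)"
  unfolding hermitian_def
proof (intro allI impI)
  fix i j assume "i < dim_row (kron A B)" "j < dim_row (kron A B)"
  then have ij: "i < a * b" "j < a * b" using A B by auto
  then have div: "i div b < a" "j div b < a" and mod: "i mod b < b" "j mod b < b"
    by (auto dest!: div_mod_less_mult)
  have "A $$ (i div b, j div b) = cnj (A $$ (j div b, i div b))"
    using hA A div unfolding hermitian_def by blast
  moreover have "B $$ (i mod b, j mod b) = cnj (B $$ (j mod b, i mod b))"
    using hB B mod unfolding hermitian_def by blast
  ultimately show "kron A B $$ (i, j) = cnj (kron A B $$ (j, i))"
    using A B ij by simp
qed

section \<open>Positive semidefinite matrices and averages\<close>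

lemma quadratic_form_sum:
  "A \<in> carrier_mat n n \<Longrightarrow> v \<in> carrier_vec n \<Longrightarrow>
   conjugate v \<bullet> (A *\<^sub>v v) = (\<Sum>i<n. \<Sum>j<n. cnj (v $ i) * A $$ (i, j) * v $ j)"
  by (simp add: scalar_prod_def lessThan_atLeast0 index_mult_mat_vec_sum sum_distrib_left mult.assoc)

lemma hermitian_inner_mult_mat_vec:
  assumes W: "W \<in> carrier_mat n n" and hW: "hermitian W" and v: "v \<in> carrier_vec n" and w: "w \<in> carrier_vec n"
  shows "conjugate v \<bullet> (W *\<^sub>v w) = conjugate (W *\<^sub>v v) \<bullet> w"
proof -
  have herm: "cnj (W $$ (j, i)) = W $$ (i, j)" if "i < n" "j < n" for i j
    using hW W that unfolding hermitian_def by (metis carrier_matD(1) complex_cnj_cnj)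
  have "conjugate v \<bullet> (W *\<^sub>v w) = (\<Sum>i<n. \<Sum>j<n. cnj (v $ i) * W $$ (i, j) * w $ j)"
    using assms by (simp add: scalar_prod_def lessThan_atLeast0 index_mult_mat_vec_sum sum_distrib_left mult.assoc)
  also have "\<dots> = (\<Sum>j<n. \<Sum>i<n. cnj (v $ i) * W $$ (i, j) * w $ j)"
    by (rule sum.swap)
  also have "\<dots> = (\<Sum>j<n. cnj ((W *\<^sub>v v) $ j) * w $ j)"
  proof (rule sum.cong[OF refl])
    fix j assume j: "j \<in> {..<n}"
    then have "cnj ((W *\<^sub>v v) $ j) = (\<Sum>i<n. cnj (W $$ (j, i)) * cnj (v $ i))"
      by (subst index_mult_mat_vec_sum[OF W v]) (simp_all add: cnj_sum)
    also have "\<dots> = (\<Sum>i<n. W $$ (i, j) * cnj (v $ i))"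
      using j herm by (intro sum.cong refl) simp
    finally show "(\<Sum>i<n. cnj (v $ i) * W $$ (i, j) * w $ j) = cnj ((W *\<^sub>v v) $ j) * w $ j"
      by (simp add: sum_distrib_left sum_distrib_right mult_ac)
  qed
  also have "\<dots> = conjugate (W *\<^sub>v v) \<bullet> w"
    using assms by (simp add: scalar_prod_def lessThan_atLeast0)
  finally show ?thesis .
qed

lemma psd_iff_carrier:
  "A \<in> carrier_mat n n \<Longrightarrow>
   psd A \<longleftrightarrow> (\<forall>v \<in> carrier_vec n. conjugate v \<bullet> (A *\<^sub>v v) \<in> \<real> \<and> 0 \<le> Re (conjugate v \<bullet> (A *\<^sub>v v)))"
  unfolding psd_def by auto

lemma psd_hermitian_sandwich:
  assumes W: "W \<in> carrier_mat n n" "hermitian W" and U: "U \<in> carrier_mat n n" "psd U"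
  shows "psd (W * U * W)"
proof -
  have "conjugate v \<bullet> (W * U * W *\<^sub>v v) = conjugate (W *\<^sub>v v) \<bullet> (U *\<^sub>v (W *\<^sub>v v))"
    if v: "v \<in> carrier_vec n" for v
  proof -
    have "W * U * W *\<^sub>v v = (W * U) *\<^sub>v (W *\<^sub>v v)"
      by (rule assoc_mult_mat_vec[OF mult_carrier_mat[OF W(1) U(1)] W(1) v])
    also have "\<dots> = W *\<^sub>v (U *\<^sub>v (W *\<^sub>v v))"
      by (rule assoc_mult_mat_vec[OF W(1) U(1) mult_mat_vec_carrier[OF W(1) v]])
    finally have "W * U * W *\<^sub>v v = W *\<^sub>v (U *\<^sub>v (W *\<^sub>v v))" .
    then show ?thesis
      using W U v by (simp add: hermitian_inner_mult_mat_vec[of W n])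
  qed
  with U W show ?thesis
    by (simp add: psd_iff_carrier[of _ n])
qed

definition mat_average :: "nat \<Rightarrow> 'a set \<Rightarrow> ('a \<Rightarrow> complex mat) \<Rightarrow> complex mat" where
  "mat_average D X F = mat D D (\<lambda>(i, j). 1 / of_nat (card X) * (\<Sum>x\<in>X. F x $$ (i, j)))"

lemma mat_average_carrier: "mat_average D X F \<in> carrier_mat D D"
  unfolding mat_average_def by simp

lemma mat_average_dims [simp]: "dim_row (mat_average D X F) = D" "dim_col (mat_average D X F) = D"
  unfolding mat_average_def by simp_all

lemma index_mat_average [simp]:
  "i < D \<Longrightarrow> j < D \<Longrightarrow> mat_average D X F $$ (i, j) = 1 / of_nat (card X) * (\<Sum>x\<in>X. F x $$ (i, j))"
  unfolding mat_average_def by simp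

lemma mat_average_cong:
  "(\<And>x. x \<in> X \<Longrightarrow> F x = G x) \<Longrightarrow> mat_average D X F = mat_average D X G"
  unfolding mat_average_def by simp

lemma mult_mat_average_mult:
  assumes A: "A \<in> carrier_mat D D" and C: "C \<in> carrier_mat D D"
    and F: "\<And>x. x \<in> X \<Longrightarrow> F x \<in> carrier_mat D D"
  shows "A * mat_average D X F * C = mat_average D X (\<lambda>x. A * F x * C)"
proof (rule eq_matI)
  fix i j assume "i < dim_row (mat_average D X (\<lambda>x. A * F x * C))"
    "j < dim_col (mat_average D X (\<lambda>x. A * F x * C))"
  then have ij: "i < D" "j < D" by (simp_all add: mat_average_def)
  have "(A * mat_average D X F * C) $$ (i, j) =
      1 / of_nat (card X) * (\<Sum>a<D. \<Sum>b<D. \<Sum>x\<in>X. A $$ (i, a) * F x $$ (a, b) * C $$ (b, j))"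
    using ij by (simp add: index_mult3_mat_sum[OF A mat_average_carrier C] sum_distrib_left
        sum_distrib_right mult_ac)
  also have "\<dots> = mat_average D X (\<lambda>x. A * F x * C) $$ (i, j)"
    using ij by (simp add: index_mult3_mat_sum[OF A F C] sum.swap[of _ X])
  finally show "(A * mat_average D X F * C) $$ (i, j) = mat_average D X (\<lambda>x. A * F x * C) $$ (i, j)" .
qed (use A C in \<open>simp_all add: mat_average_def\<close>)

lemma mat_average_reindex:
  assumes "bij_betw g X Y"
  shows "mat_average D X (\<lambda>x. F (g x)) = mat_average D Y F"
proof (rule eq_matI)
  fix i j assume "i < dim_row (mat_average D Y F)" "j < dim_col (mat_average D Y F)"
  then show "mat_average D X (\<lambda>x. F (g x)) $$ (i, j) = mat_average D Y F $$ (i, j)"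
    using sum.reindex_bij_betw[OF assms, of "\<lambda>y. F y $$ (i, j)"] bij_betw_same_card[OF assms] by simp
qed simp_all

lemma mat_average_const:
  assumes "finite X" "X \<noteq> {}" "M \<in> carrier_mat D D" "\<And>x. x \<in> X \<Longrightarrow> F x = M"
  shows "mat_average D X F = M"
  by (rule eq_matI) (use assms in \<open>simp_all add: mat_average_def\<close>)

lemma mat_average_Times_fst:
  assumes "finite X" "finite Y" "Y \<noteq> {}"
  shows "mat_average D (X \<times> Y) (\<lambda>(x, y). F x) = mat_average D X F"
proof (rule eq_matI)
  fix i j assume "i < dim_row (mat_average D X F)" "j < dim_col (mat_average D X F)"
  then have ij: "i < D" "j < D" by (simp_all add: mat_average_def)
  have "(\<Sum>p\<in>X \<times> Y. (case p of (x, y) \<Rightarrow> F x) $$ (i, j)) = (\<Sum>(x, y)\<in>X \<times> Y. F x $$ (i, j))"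
    by (intro sum.cong) auto
  also have "\<dots> = (\<Sum>x\<in>X. \<Sum>y\<in>Y. F x $$ (i, j))"
    by (rule sum.cartesian_product[symmetric])
  also have "\<dots> = of_nat (card Y) * (\<Sum>x\<in>X. F x $$ (i, j))"
    by (simp add: sum_distrib_left)
  finally have "(\<Sum>p\<in>X \<times> Y. (case p of (x, y) \<Rightarrow> F x) $$ (i, j)) = of_nat (card Y) * (\<Sum>x\<in>X. F x $$ (i, j))" .
  then show "mat_average D (X \<times> Y) (\<lambda>(x, y). F x) $$ (i, j) = mat_average D X F $$ (i, j)"
    using ij assms by (simp add: card_cartesian_product)
qed (simp_all add: mat_average_def)

lemma psd_mat_average:
  assumes F: "\<And>x. x \<in> X \<Longrightarrow> F x \<in> carrier_mat D D \<and> psd (F x)"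
  shows "psd (mat_average D X F)"
proof -
  have "conjugate v \<bullet> (mat_average D X F *\<^sub>v v) \<in> \<real> \<and> 0 \<le> Re (conjugate v \<bullet> (mat_average D X F *\<^sub>v v))"
    if v: "v \<in> carrier_vec D" for v
  proof -
    define r where "r x = Re (conjugate v \<bullet> (F x *\<^sub>v v))" for x
    have r: "conjugate v \<bullet> (F x *\<^sub>v v) = of_real (r x)" "0 \<le> r x" if "x \<in> X" for x
      using F[OF that] v unfolding r_def by (auto simp: psd_iff_carrier[of _ D] Reals_def)
    have "conjugate v \<bullet> (mat_average D X F *\<^sub>v v) =
        1 / of_nat (card X) * (\<Sum>x\<in>X. conjugate v \<bullet> (F x *\<^sub>v v))"
      using v F by (simp add: quadratic_form_sum[OF mat_average_carrier] quadratic_form_sum[of _ D]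
          sum_distrib_left sum_distrib_right sum.swap[of _ X] mult_ac)
    also have "\<dots> = of_real (1 / real (card X) * (\<Sum>x\<in>X. r x))"
      using r by simp
    finally show ?thesis
      using r by (simp add: sum_nonneg)
  qed
  then show ?thesis
    by (simp add: psd_iff_carrier[OF mat_average_carrier])
qed

lemma kron_mat_average:
  assumes B: "B \<in> carrier_mat d d" and F: "\<And>x. x \<in> X \<Longrightarrow> F x \<in> carrier_mat D D"
  shows "kron (mat_average D X F) B = mat_average (D * d) X (\<lambda>x. kron (F x) B)"
proof (rule eq_matI)
  fix i j assume "i < dim_row (mat_average (D * d) X (\<lambda>x. kron (F x) B))"
    "j < dim_col (mat_average (D * d) X (\<lambda>x. kron (F x) B))"
  then have ij: "i < D * d" "j < D * d" by simp_all
  then have div: "i div d < D" "j div d < D" and mod: "i mod d < d" "j mod d < d"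
    by (simp_all add: div_mod_less_mult)
  have "kron (mat_average D X F) B $$ (i, j) =
      mat_average D X F $$ (i div d, j div d) * B $$ (i mod d, j mod d)"
    using ij B by (simp only: index_kron mat_average_dims carrier_matD)
  also have "\<dots> = 1 / of_nat (card X) * (\<Sum>x\<in>X. F x $$ (i div d, j div d) * B $$ (i mod d, j mod d))"
    using div by (simp add: sum_distrib_right)
  also have "\<dots> = 1 / of_nat (card X) * (\<Sum>x\<in>X. kron (F x) B $$ (i, j))"
  proof (intro arg_cong[where f = "\<lambda>s. 1 / of_nat (card X) * s"] sum.cong refl)
    fix x assume "x \<in> X"
    then have "dim_row (F x) = D" "dim_col (F x) = D" using F by auto
    with ij carrier_matD[OF B]
    show "F x $$ (i div d, j div d) * B $$ (i mod d, j mod d) = kron (F x) B $$ (i, j)"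
      by (simp only: index_kron)
  qed
  finally show "kron (mat_average D X F) B $$ (i, j) = mat_average (D * d) X (\<lambda>x. kron (F x) B) $$ (i, j)"
    using ij by simp
qed (use B in simp_all)

section \<open>Partial trace over the last factor\<close>

lemma ptrace_last_carrier:
  "0 < d \<Longrightarrow> A \<in> carrier_mat (m * d) (m * d) \<Longrightarrow> ptrace_last d A \<in> carrier_mat m m"
  unfolding ptrace_last_def by auto

lemma index_ptrace_last:
  "0 < d \<Longrightarrow> A \<in> carrier_mat (m * d) (m * d) \<Longrightarrow> i < m \<Longrightarrow> j < m \<Longrightarrow>
   ptrace_last d A $$ (i, j) = (\<Sum>l<d. A $$ (i * d + l, j * d + l))"
  unfolding ptrace_last_def by auto

lemma ptrace_last_mat_average:
  assumes d: "0 < d" and F: "\<And>x. x \<in> X \<Longrightarrow> F x \<in> carrier_mat (m * d) (m * d)"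
  shows "ptrace_last d (mat_average (m * d) X F) = mat_average m X (\<lambda>x. ptrace_last d (F x))"
proof (rule eq_matI)
  fix i j assume "i < dim_row (mat_average m X (\<lambda>x. ptrace_last d (F x)))"
    "j < dim_col (mat_average m X (\<lambda>x. ptrace_last d (F x)))"
  then have ij: "i < m" "j < m" by simp_all
  then have "i * d + l < m * d" "j * d + l < m * d" if "l < d" for l
    using that by (simp_all add: mult_add_less_mult)
  then have "ptrace_last d (mat_average (m * d) X F) $$ (i, j) =
      1 / of_nat (card X) * (\<Sum>x\<in>X. \<Sum>l<d. F x $$ (i * d + l, j * d + l))"
    by (simp add: index_ptrace_last[OF d mat_average_carrier ij] sum_distrib_left sum.swap[of _ "{..<d}"])
  also have "\<dots> = mat_average m X (\<lambda>x. ptrace_last d (F x)) $$ (i, j)"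
    using F ij by (simp add: index_ptrace_last[OF d _ ij])
  finally show "ptrace_last d (mat_average (m * d) X F) $$ (i, j) =
      mat_average m X (\<lambda>x. ptrace_last d (F x)) $$ (i, j)" .
qed (use d in \<open>simp_all add: ptrace_last_def\<close>)

lemma sum_one_mat_mult:
  fixes g :: "nat \<Rightarrow> complex"
  assumes "l < d"
  shows "(\<Sum>y<d. 1\<^sub>m d $$ (l, y) * g y) = g l"
proof -
  have "(\<Sum>y<d. 1\<^sub>m d $$ (l, y) * g y) = (\<Sum>y<d. if l = y then g y else 0)"
    using assms by (intro sum.cong) auto
  then show ?thesis using assms by simp
qed

lemma sum_mult_one_mat:
  fixes g :: "nat \<Rightarrow> complex"
  assumes "l < d"
  shows "(\<Sum>y<d. g y * 1\<^sub>m d $$ (y, l)) = g l"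
proof -
  have "(\<Sum>y<d. g y * 1\<^sub>m d $$ (y, l)) = (\<Sum>y<d. if y = l then g y else 0)"
    using assms by (intro sum.cong) auto
  then show ?thesis using assms by simp
qed

lemma index_kron_mult:
  assumes X: "X \<in> carrier_mat m m" and P: "P \<in> carrier_mat d d" and A: "A \<in> carrier_mat (m * d) n"
    and "i < m" "l < d" "j < n"
  shows "(kron X P * A) $$ (i * d + l, j) = (\<Sum>x<m. X $$ (i, x) * (\<Sum>y<d. P $$ (l, y) * A $$ (x * d + y, j)))"
proof -
  have "(kron X P * A) $$ (i * d + l, j) = (\<Sum>z<m * d. kron X P $$ (i * d + l, z) * A $$ (z, j))"
    using assms by (intro index_mult_mat_sum[OF kron_carrier_mat[OF X P] A]) (simp_all add: mult_add_less_mult)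
  also have "\<dots> = (\<Sum>x<m. X $$ (i, x) * (\<Sum>y<d. P $$ (l, y) * A $$ (x * d + y, j)))"
    unfolding sum_lessThan_mult using assms
    by (intro sum.cong refl) (simp add: index_kron_block sum_distrib_left mult.assoc)
  finally show ?thesis .
qed

lemma index_mult_kron:
  assumes X: "X \<in> carrier_mat m m" and P: "P \<in> carrier_mat d d" and A: "A \<in> carrier_mat n (m * d)"
    and "i < n" "j < m" "l < d"
  shows "(A * kron X P) $$ (i, j * d + l) = (\<Sum>x<m. (\<Sum>y<d. A $$ (i, x * d + y) * P $$ (y, l)) * X $$ (x, j))"
proof -
  have "(A * kron X P) $$ (i, j * d + l) = (\<Sum>z<m * d. A $$ (i, z) * kron X P $$ (z, j * d + l))"
    using assms by (intro index_mult_mat_sum[OF A kron_carrier_mat[OF X P]]) (simp_all add: mult_add_less_mult)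
  also have "\<dots> = (\<Sum>x<m. \<Sum>y<d. A $$ (i, x * d + y) * (X $$ (x, j) * P $$ (y, l)))"
    unfolding sum_lessThan_mult using assms by (intro sum.cong refl) (simp add: index_kron_block)
  also have "\<dots> = (\<Sum>x<m. (\<Sum>y<d. A $$ (i, x * d + y) * P $$ (y, l)) * X $$ (x, j))"
    by (simp add: sum_distrib_left sum_distrib_right mult_ac)
  finally show ?thesis .
qed

lemma ptrace_last_kron_one_mult:
  assumes d: "0 < d" and X: "X \<in> carrier_mat m m" and A: "A \<in> carrier_mat (m * d) (m * d)"
  shows "ptrace_last d (kron X (1\<^sub>m d) * A) = X * ptrace_last d A"
proof (rule eq_matI)
  fix i j assume "i < dim_row (X * ptrace_last d A)" "j < dim_col (X * ptrace_last d A)"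
  then have ij: "i < m" "j < m" using X ptrace_last_carrier[OF d A] by simp_all
  have XA: "kron X (1\<^sub>m d) * A \<in> carrier_mat (m * d) (m * d)"
    using mult_carrier_mat[OF kron_carrier_mat[OF X one_carrier_mat[of d]] A] .
  have "ptrace_last d (kron X (1\<^sub>m d) * A) $$ (i, j) =
      (\<Sum>l<d. \<Sum>x<m. X $$ (i, x) * A $$ (x * d + l, j * d + l))"
    using ij mult_add_less_mult[of j m _ d]
    by (simp add: index_ptrace_last[OF d XA ij] index_kron_mult[OF X one_carrier_mat A] sum_one_mat_mult
        del: index_one_mat)
  also have "\<dots> = (X * ptrace_last d A) $$ (i, j)"
    using ij by (simp add: index_mult_mat_sum[OF X ptrace_last_carrier[OF d A]] index_ptrace_last[OF d A]
        sum_distrib_left sum.swap[of _ "{..<d}"])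
  finally show "ptrace_last d (kron X (1\<^sub>m d) * A) $$ (i, j) = (X * ptrace_last d A) $$ (i, j)" .
qed (use d X A in \<open>simp_all add: ptrace_last_def\<close>)

lemma ptrace_last_mult_kron_one:
  assumes d: "0 < d" and X: "X \<in> carrier_mat m m" and A: "A \<in> carrier_mat (m * d) (m * d)"
  shows "ptrace_last d (A * kron X (1\<^sub>m d)) = ptrace_last d A * X"
proof (rule eq_matI)
  fix i j assume "i < dim_row (ptrace_last d A * X)" "j < dim_col (ptrace_last d A * X)"
  then have ij: "i < m" "j < m" using X ptrace_last_carrier[OF d A] by simp_all
  have AX: "A * kron X (1\<^sub>m d) \<in> carrier_mat (m * d) (m * d)"
    using mult_carrier_mat[OF A kron_carrier_mat[OF X one_carrier_mat[of d]]] .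
  have "ptrace_last d (A * kron X (1\<^sub>m d)) $$ (i, j) =
      (\<Sum>l<d. \<Sum>x<m. A $$ (i * d + l, x * d + l) * X $$ (x, j))"
    using ij mult_add_less_mult[of i m _ d]
    by (simp add: index_ptrace_last[OF d AX ij] index_mult_kron[OF X one_carrier_mat A] sum_mult_one_mat
        del: index_one_mat)
  also have "\<dots> = (ptrace_last d A * X) $$ (i, j)"
    using ij by (simp add: index_mult_mat_sum[OF ptrace_last_carrier[OF d A] X] index_ptrace_last[OF d A]
        sum_distrib_right sum.swap[of _ "{..<d}"])
  finally show "ptrace_last d (A * kron X (1\<^sub>m d)) $$ (i, j) = (ptrace_last d A * X) $$ (i, j)" .
qed (use d X A in \<open>simp_all add: ptrace_last_def\<close>)

lemma ptrace_last_one_kron_mult_commute: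
  assumes d: "0 < d" and P: "P \<in> carrier_mat d d" and A: "A \<in> carrier_mat (m * d) (m * d)"
  shows "ptrace_last d (kron (1\<^sub>m m) P * A) = ptrace_last d (A * kron (1\<^sub>m m) P)"
proof (rule eq_matI)
  have PA: "kron (1\<^sub>m m) P * A \<in> carrier_mat (m * d) (m * d)"
    and AP: "A * kron (1\<^sub>m m) P \<in> carrier_mat (m * d) (m * d)"
    using mult_carrier_mat[OF kron_carrier_mat[OF one_carrier_mat P] A]
      mult_carrier_mat[OF A kron_carrier_mat[OF one_carrier_mat P]] by simp_all
  fix i j assume "i < dim_row (ptrace_last d (A * kron (1\<^sub>m m) P))"
    "j < dim_col (ptrace_last d (A * kron (1\<^sub>m m) P))"
  then have ij: "i < m" "j < m" using ptrace_last_carrier[OF d AP] by simp_all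
  have "ptrace_last d (kron (1\<^sub>m m) P * A) $$ (i, j) = (\<Sum>l<d. \<Sum>y<d. P $$ (l, y) * A $$ (i * d + y, j * d + l))"
    using ij mult_add_less_mult[of j m _ d]
    by (simp add: index_ptrace_last[OF d PA ij] index_kron_mult[OF one_carrier_mat P A] sum_one_mat_mult
        del: index_one_mat)
  also have "\<dots> = (\<Sum>y<d. \<Sum>l<d. A $$ (i * d + y, j * d + l) * P $$ (l, y))"
    by (subst sum.swap) (simp add: mult.commute)
  also have "\<dots> = ptrace_last d (A * kron (1\<^sub>m m) P) $$ (i, j)"
    using ij mult_add_less_mult[of i m _ d]
    by (simp add: index_ptrace_last[OF d AP ij] index_mult_kron[OF one_carrier_mat P A] sum_mult_one_mat
        del: index_one_mat)
  finally show "ptrace_last d (kron (1\<^sub>m m) P * A) $$ (i, j) = ptrace_last d (A * kron (1\<^sub>m m) P) $$ (i, j)" .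
qed (use d P A in \<open>simp_all add: ptrace_last_def\<close>)

lemma ptrace_last_sandwich:
  assumes d: "0 < d" and X: "X \<in> carrier_mat m m" and P: "P \<in> carrier_mat d d" and PP: "P * P = 1\<^sub>m d"
    and U: "U \<in> carrier_mat (m * d) (m * d)"
  shows "ptrace_last d (kron X P * U * kron X P) = X * ptrace_last d U * X"
proof -
  let ?L = "kron X (1\<^sub>m d)" and ?R = "kron (1\<^sub>m m) P"
  have L: "?L \<in> carrier_mat (m * d) (m * d)" and R: "?R \<in> carrier_mat (m * d) (m * d)"
    using kron_carrier_mat[OF X one_carrier_mat[of d]] kron_carrier_mat[OF one_carrier_mat[of m] P] by simp_all
  have "kron X P = ?L * ?R" "kron X P = ?R * ?L"
    using kron_mult_kron[OF X one_carrier_mat one_carrier_mat P] kron_mult_kron[OF one_carrier_mat P X one_carrier_mat]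
      X P by simp_all
  then have "kron X P * U * kron X P = ?L * (?R * U * ?R) * ?L"
    using L R U by (simp add: assoc_mult_mat[of _ "m * d" "m * d" _ "m * d" _ "m * d"])
  moreover have V: "?R * U * ?R \<in> carrier_mat (m * d) (m * d)"
    using R U by simp
  ultimately have "ptrace_last d (kron X P * U * kron X P) = X * (ptrace_last d (?R * U * ?R) * X)"
    by (simp add: assoc_mult_mat[OF L V L] ptrace_last_kron_one_mult[OF d X mult_carrier_mat[OF V L]]
        ptrace_last_mult_kron_one[OF d X V])
  also have "\<dots> = X * ptrace_last d (?R * U * ?R) * X"
    using X ptrace_last_carrier[OF d V] by (simp add: assoc_mult_mat)
  also have "ptrace_last d (?R * U * ?R) = ptrace_last d (U * ?R * ?R)"
    using R U ptrace_last_one_kron_mult_commute[OF d P, of "U * ?R"]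
    by (simp add: assoc_mult_mat[of _ "m * d" "m * d" _ "m * d" _ "m * d"])
  also have "U * ?R * ?R = U"
    using R U PP kron_mult_kron[OF one_carrier_mat P one_carrier_mat P]
    by (simp add: assoc_mult_mat[of _ "m * d" "m * d" _ "m * d" _ "m * d"] kron_one_mat)
  finally show ?thesis .
qed

section \<open>Pauli operators\<close>

definition mat2 :: "complex \<Rightarrow> complex \<Rightarrow> complex \<Rightarrow> complex \<Rightarrow> complex mat" where
  "mat2 a b c d = mat_of_rows_list 2 [[a, b], [c, d]]"

lemma mat2_carrier: "mat2 a b c d \<in> carrier_mat 2 2"
  unfolding mat2_def mat_of_rows_list_def by (simp add: numeral_2_eq_2)

lemma mat2_dims [simp]: "dim_row (mat2 a b c d) = 2" "dim_col (mat2 a b c d) = 2"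
  using mat2_carrier[of a b c d] by auto

lemma less_2_cases: "(i :: nat) < 2 \<Longrightarrow> i = 0 \<or> i = 1"
  by auto

lemma index_mat2:
  "i < 2 \<Longrightarrow> j < 2 \<Longrightarrow>
   mat2 a b c d $$ (i, j) = (if i = 0 then if j = 0 then a else b else if j = 0 then c else d)"
  unfolding mat2_def mat_of_rows_list_def by (auto dest!: less_2_cases)

lemma mat2_eq_iff: "mat2 a b c d = mat2 a' b' c' d' \<longleftrightarrow> a = a' \<and> b = b' \<and> c = c' \<and> d = d'"
proof
  assume eq: "mat2 a b c d = mat2 a' b' c' d'"
  have "mat2 a b c d $$ (i, j) = mat2 a' b' c' d' $$ (i, j)" for i j
    by (simp only: eq)
  from this[of 0 0] this[of 0 1] this[of 1 0] this[of 1 1]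
  show "a = a' \<and> b = b' \<and> c = c' \<and> d = d'" by (simp add: index_mat2)
qed simp

lemma mat2_mult: "mat2 a b c d * mat2 e f g h = mat2 (a*e + b*g) (a*f + b*h) (c*e + d*g) (c*f + d*h)"
proof (rule eq_matI)
  fix i j assume "i < dim_row (mat2 (a*e + b*g) (a*f + b*h) (c*e + d*g) (c*f + d*h))"
    "j < dim_col (mat2 (a*e + b*g) (a*f + b*h) (c*e + d*g) (c*f + d*h))"
  then have "i < 2" "j < 2" by simp_all
  moreover have "(\<Sum>x\<in>{0..<2::nat}. F x) = F 0 + F 1" for F :: "nat \<Rightarrow> complex"
    by (simp add: numeral_2_eq_2)
  ultimately show "(mat2 a b c d * mat2 e f g h) $$ (i, j) =
      mat2 (a*e + b*g) (a*f + b*h) (c*e + d*g) (c*f + d*h) $$ (i, j)"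
    by (simp add: scalar_prod_def index_mat2)
qed simp_all

lemma smult_mat2: "x \<cdot>\<^sub>m mat2 a b c d = mat2 (x * a) (x * b) (x * c) (x * d)"
  by (rule eq_matI) (auto simp: index_mat2)

lemma one_mat2: "1\<^sub>m 2 = mat2 1 0 0 1"
  by (rule eq_matI) (auto simp: index_mat2 dest!: less_2_cases)

lemma mat_trace_mat2: "mat_trace (mat2 a b c d) = a + d"
  by (simp add: mat_trace_def numeral_2_eq_2 index_mat2)

lemma pauli1_mat2:
  "pauli1 p = (if p = 0 then mat2 1 0 0 1 else if p = 1 then mat2 0 1 1 0
     else if p = 2 then mat2 0 (-\<i>) \<i> 0 else mat2 1 0 0 (-1))"
  unfolding pauli1_def mat2_def by simp

text \<open>Two distinct non-identity Paulis multiply to a phase times the third one, whose index is \<open>6 - p - q\<close>.\<close>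

definition pauli_index_mult :: "nat \<Rightarrow> nat \<Rightarrow> nat" where
  "pauli_index_mult p q = (if p = 0 then q else if q = 0 then p else if p = q then 0 else 6 - p - q)"

definition pauli_phase :: "nat \<Rightarrow> nat \<Rightarrow> complex" where
  "pauli_phase p q =
     (if p = 0 \<or> q = 0 \<or> p = q then 1
      else if (p, q) \<in> {(1, 2), (2, 3), (3, 1)} then \<i> else -\<i>)"

lemma less_4_cases: "(p :: nat) < 4 \<Longrightarrow> p = 0 \<or> p = 1 \<or> p = 2 \<or> p = 3"
  by auto

lemma pauli1_mult:
  "p < 4 \<Longrightarrow> q < 4 \<Longrightarrow> pauli1 p * pauli1 q = pauli_phase p q \<cdot>\<^sub>m pauli1 (pauli_index_mult p q)"
  by (drule less_4_cases)+
    (elim disjE; simp add: pauli1_mat2 mat2_mult smult_mat2 mat2_eq_iff pauli_index_mult_def pauli_phase_def)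

lemma pauli_phase_swap: "p < 4 \<Longrightarrow> q < 4 \<Longrightarrow> pauli_phase p q * pauli_phase q p = 1"
  by (drule less_4_cases)+ (elim disjE; simp add: pauli_phase_def)

lemma pauli_index_mult_less: "p < 4 \<Longrightarrow> q < 4 \<Longrightarrow> pauli_index_mult p q < 4"
  by (auto dest!: less_4_cases simp: pauli_index_mult_def)

lemma pauli_index_mult_commute: "pauli_index_mult p q = pauli_index_mult q p"
  by (auto simp: pauli_index_mult_def)

lemma pauli1_carrier: "pauli1 p \<in> carrier_mat 2 2"
  by (simp add: pauli1_mat2 mat2_carrier)

lemma pauli1_square: "pauli1 p * pauli1 p = 1\<^sub>m 2"
  by (simp add: pauli1_mat2 mat2_mult one_mat2 mat2_eq_iff)

lemma mat_trace_pauli1_mult: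
  "p < 4 \<Longrightarrow> q < 4 \<Longrightarrow> mat_trace (pauli1 p * pauli1 q) = (if p = q then 2 else 0)"
  by (drule less_4_cases)+ (elim disjE; simp add: pauli1_mat2 mat2_mult mat_trace_mat2)

lemma hermitian_pauli1: "hermitian (pauli1 p)"
  by (auto dest!: less_2_cases simp: hermitian_def pauli1_mat2 index_mat2)

lemma pauli_string_Nil [simp]: "pauli_string [] = 1\<^sub>m 1"
  by (simp add: pauli_string_def)

lemma pauli_string_Cons [simp]: "pauli_string (p # ps) = kron (pauli1 p) (pauli_string ps)"
  by (simp add: pauli_string_def)

lemma pauli_string_carrier: "pauli_string ps \<in> carrier_mat (2 ^ length ps) (2 ^ length ps)"
  by (induction ps) (auto dest: kron_carrier_mat[OF pauli1_carrier])

lemma pauli_string_square: "pauli_string ps * pauli_string ps = 1\<^sub>m (2 ^ length ps)"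
  by (induction ps)
    (simp_all add: kron_mult_kron[OF pauli1_carrier pauli_string_carrier pauli1_carrier pauli_string_carrier]
      pauli1_square kron_one_mat)

lemma hermitian_pauli_string: "hermitian (pauli_string ps)"
  by (induction ps)
    (simp_all add: hermitian_one_mat hermitian_kron[OF pauli1_carrier pauli_string_carrier hermitian_pauli1])

definition pauli_string_phase :: "nat list \<Rightarrow> nat list \<Rightarrow> complex" where
  "pauli_string_phase ps qs = prod_list (map2 pauli_phase ps qs)"

lemma pauli_string_mult:
  assumes "length ps = length qs" "set ps \<subseteq> {..<4}" "set qs \<subseteq> {..<4}"
  shows "pauli_string ps * pauli_string qs =
    pauli_string_phase ps qs \<cdot>\<^sub>m pauli_string (map2 pauli_index_mult ps qs)"
  using assms
proof (induction ps qs rule: list_induct2)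
  case (Cons p ps q qs)
  have "pauli_string (p # ps) * pauli_string (q # qs) =
      kron (pauli1 p * pauli1 q) (pauli_string ps * pauli_string qs)"
    using pauli_string_carrier[of qs] Cons.hyps
    by (simp add: kron_mult_kron[OF pauli1_carrier pauli_string_carrier pauli1_carrier])
  with Cons show ?case
    by (simp add: pauli1_mult pauli_string_phase_def kron_smult_left kron_smult_right smult_smult_mat
        mult.commute)
qed (simp add: pauli_string_phase_def)

lemma pauli_string_phase_swap:
  "length ps = length qs \<Longrightarrow> set ps \<subseteq> {..<4} \<Longrightarrow> set qs \<subseteq> {..<4} \<Longrightarrow>
   pauli_string_phase ps qs * pauli_string_phase qs ps = 1"
proof (induction ps qs rule: list_induct2)
  case (Cons p ps q qs)
  then have "pauli_phase p q * pauli_phase q p = 1" by (simp add: pauli_phase_swap)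
  with Cons show ?case
    by (simp add: pauli_string_phase_def) (metis mult.assoc mult.left_commute mult_1_right)
qed (simp add: pauli_string_phase_def)

lemma map2_pauli_index_mult_commute: "map2 pauli_index_mult ps qs = map2 pauli_index_mult qs ps"
  by (induction ps arbitrary: qs) (auto simp: pauli_index_mult_commute zip_Cons1 split: list.split)

lemma mat_trace_pauli_string_mult:
  "length ps = length qs \<Longrightarrow> set ps \<subseteq> {..<4} \<Longrightarrow> set qs \<subseteq> {..<4} \<Longrightarrow>
   mat_trace (pauli_string ps * pauli_string qs) = (if ps = qs then 2 ^ length ps else 0)"
proof (induction ps qs rule: list_induct2)
  case (Cons p ps q qs)
  have "pauli_string (p # ps) * pauli_string (q # qs) =
      kron (pauli1 p * pauli1 q) (pauli_string ps * pauli_string qs)"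
    using pauli_string_carrier[of qs] Cons.hyps
    by (simp add: kron_mult_kron[OF pauli1_carrier pauli_string_carrier pauli1_carrier])
  moreover have "pauli_string ps * pauli_string qs \<in> carrier_mat (2 ^ length ps) (2 ^ length ps)"
    using pauli_string_carrier[of ps] pauli_string_carrier[of qs] Cons.hyps by auto
  ultimately show ?case
    using Cons by (simp add: mat_trace_kron[OF mult_carrier_mat[OF pauli1_carrier pauli1_carrier]]
        mat_trace_pauli1_mult)
qed simp

lemma paulis_eq_image: "paulis n = pauli_string ` {ps. set ps \<subseteq> {..<4} \<and> length ps = n}"
  unfolding paulis_def by blast

lemma finite_paulis: "finite (paulis n)"
  unfolding paulis_eq_image by (intro finite_imageI finite_lists_length_eq) simp

lemma paulis_nonempty: "paulis n \<noteq> {}"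
  unfolding paulis_def by (auto intro!: exI[of _ "replicate n 0"])

lemma paulis_carrier: "P \<in> paulis n \<Longrightarrow> P \<in> carrier_mat (sysdim n) (sysdim n)"
  unfolding paulis_def sysdim_def using pauli_string_carrier by blast

lemma paulis_square: "P \<in> paulis n \<Longrightarrow> P * P = 1\<^sub>m (sysdim n)"
  unfolding paulis_def sysdim_def using pauli_string_square by blast

lemma hermitian_paulis: "P \<in> paulis n \<Longrightarrow> hermitian P"
  unfolding paulis_def using hermitian_pauli_string by blast

lemma paulis_mult:
  assumes "P \<in> paulis n" "Q \<in> paulis n"
  shows "\<exists>R \<in> paulis n. \<exists>c c'. Q * P = c \<cdot>\<^sub>m R \<and> P * Q = c' \<cdot>\<^sub>m R \<and> c * c' = 1"
proof -
  obtain ps qs where P: "P = pauli_string ps" "length ps = n" "set ps \<subseteq> {..<4}"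
    and Q: "Q = pauli_string qs" "length qs = n" "set qs \<subseteq> {..<4}"
    using assms unfolding paulis_def by blast
  let ?rs = "map2 pauli_index_mult qs ps"
  have "set ?rs \<subseteq> {..<4}"
    using P Q by (auto intro!: pauli_index_mult_less dest: set_zip_leftD set_zip_rightD)
  then have "pauli_string ?rs \<in> paulis n"
    unfolding paulis_def using P Q by (intro CollectI exI[of _ ?rs]) simp
  moreover have "Q * P = pauli_string_phase qs ps \<cdot>\<^sub>m pauli_string ?rs"
    and "P * Q = pauli_string_phase ps qs \<cdot>\<^sub>m pauli_string ?rs"
    using P Q pauli_string_mult[of qs ps] pauli_string_mult[of ps qs]
    by (simp_all add: map2_pauli_index_mult_commute[of ps])
  moreover have "pauli_string_phase qs ps * pauli_string_phase ps qs = 1"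
    using P Q by (simp add: pauli_string_phase_swap)
  ultimately show ?thesis by blast
qed

text \<open>Distinct Pauli strings are orthogonal for the trace inner product.\<close>

lemma paulis_eq_if_proportional:
  assumes P: "P \<in> paulis n" and R: "R \<in> paulis n" and eq: "P = \<mu> \<cdot>\<^sub>m R"
  shows "P = R"
proof (rule ccontr)
  assume "P \<noteq> R"
  obtain ps rs where ps: "P = pauli_string ps" "length ps = n" "set ps \<subseteq> {..<4}"
    and rs: "R = pauli_string rs" "length rs = n" "set rs \<subseteq> {..<4}"
    using P R unfolding paulis_def by blast
  have "mat_trace (R * P) = 0"
    using \<open>P \<noteq> R\<close> ps rs mat_trace_pauli_string_mult[of rs ps] by auto
  have "P * P = \<mu> \<cdot>\<^sub>m (R * P)"
    using eq paulis_carrier[OF P] paulis_carrier[OF R] by (metis mult_smult_assoc_mat)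
  then have "mat_trace (P * P) = \<mu> * mat_trace (R * P)"
    using mat_trace_smult paulis_carrier[OF P] paulis_carrier[OF R] by (metis mult_carrier_mat)
  then show False
    using \<open>mat_trace (R * P) = 0\<close> paulis_square[OF P] by (simp add: sysdim_def)
qed

definition pauli_mult :: "nat \<Rightarrow> complex mat \<Rightarrow> complex mat \<Rightarrow> complex mat" where
  "pauli_mult n Q P = (SOME R. R \<in> paulis n \<and> (\<exists>c c'. Q * P = c \<cdot>\<^sub>m R \<and> P * Q = c' \<cdot>\<^sub>m R \<and> c * c' = 1))"

lemma pauli_mult_in_paulis: "P \<in> paulis n \<Longrightarrow> Q \<in> paulis n \<Longrightarrow> pauli_mult n Q P \<in> paulis n"
  using someI_ex[OF paulis_mult[unfolded Bex_def]] unfolding pauli_mult_def by blast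

lemma pauli_mult_proportional:
  assumes "P \<in> paulis n" "Q \<in> paulis n"
  shows "\<exists>c c'. Q * P = c \<cdot>\<^sub>m pauli_mult n Q P \<and> P * Q = c' \<cdot>\<^sub>m pauli_mult n Q P \<and> c * c' = 1"
  using someI_ex[OF paulis_mult[OF assms, unfolded Bex_def]] unfolding pauli_mult_def by blast

lemma inj_on_pauli_mult:
  assumes Q: "Q \<in> paulis n"
  shows "inj_on (pauli_mult n Q) (paulis n)"
proof (rule inj_onI)
  fix P1 P2 assume P1: "P1 \<in> paulis n" and P2: "P2 \<in> paulis n"
    and eq: "pauli_mult n Q P1 = pauli_mult n Q P2"
  let ?R = "pauli_mult n Q P1"
  obtain c1 :: complex where c1: "Q * P1 = c1 \<cdot>\<^sub>m ?R"
    using pauli_mult_proportional[OF P1 Q] by blast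
  obtain c2 c2' where c2: "Q * P2 = c2 \<cdot>\<^sub>m ?R" "c2 * c2' = 1"
    using pauli_mult_proportional[OF P2 Q] eq by auto
  have carrier: "Q \<in> carrier_mat (sysdim n) (sysdim n)" "?R \<in> carrier_mat (sysdim n) (sysdim n)"
    using paulis_carrier Q pauli_mult_in_paulis[OF P1 Q] by auto
  have recover: "P = c \<cdot>\<^sub>m (Q * ?R)" if "P \<in> paulis n" "Q * P = c \<cdot>\<^sub>m ?R" for P c
  proof -
    have "P = Q * Q * P" using paulis_square[OF Q] paulis_carrier[OF that(1)] by simp
    also have "\<dots> = Q * (Q * P)" using carrier paulis_carrier[OF that(1)] by (simp add: assoc_mult_mat)
    finally show ?thesis using that(2) carrier by (simp add: mult_smult_distrib)
  qed
  have "P1 = (c1 / c2) \<cdot>\<^sub>m P2"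
    using recover[OF P1 c1] recover[OF P2 c2(1)] c2(2) by (auto simp: smult_smult_mat)
  then show "P1 = P2" by (rule paulis_eq_if_proportional[OF P1 P2])
qed

section \<open>The multi-time Pauli twirl\<close>

definition pauli_lists :: "nat \<Rightarrow> nat \<Rightarrow> complex mat list set" where
  "pauli_lists n m = {Ps. length Ps = m \<and> set Ps \<subseteq> paulis n}"

lemma pauli_lists_0: "pauli_lists n 0 = {[]}"
  unfolding pauli_lists_def by auto

lemma finite_pauli_lists: "finite (pauli_lists n m)"
  unfolding pauli_lists_def using finite_lists_length_eq[OF finite_paulis] by (simp add: conj_commute)

lemma card_pauli_lists: "card (pauli_lists n m) = card (paulis n) ^ m"
  unfolding pauli_lists_def using card_lists_length_eq[OF finite_paulis] by (simp add: conj_commute)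

lemma pauli_lists_nonempty: "pauli_lists n m \<noteq> {}"
  using card_pauli_lists[of n m] finite_paulis paulis_nonempty by fastforce

lemma bij_betw_append_pauli_lists:
  "bij_betw (\<lambda>(Ps, P). Ps @ [P]) (pauli_lists n m \<times> paulis n) (pauli_lists n (Suc m))"
proof (rule bij_betwI')
  fix Ps assume Ps: "Ps \<in> pauli_lists n (Suc m)"
  then have "Ps \<noteq> []" by (auto simp: pauli_lists_def)
  with Ps show "\<exists>x \<in> pauli_lists n m \<times> paulis n. Ps = (case x of (Ps, P) \<Rightarrow> Ps @ [P])"
    unfolding pauli_lists_def
    by (intro bexI[of _ "(butlast Ps, last Ps)"]) (auto dest: in_set_butlastD)
qed (auto simp: pauli_lists_def)

lemma twirl_op_Nil [simp]: "twirl_op [] = 1\<^sub>m 1"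
  by (simp add: twirl_op_def)

lemma twirl_op_Cons [simp]: "twirl_op (P # Ps) = kron (kron P P) (twirl_op Ps)"
  by (simp add: twirl_op_def)

lemma twirl_op_append_single: "twirl_op (Ps @ [P]) = kron (kron (twirl_op Ps) P) P"
proof (induction Ps)
  case Nil
  show ?case by (simp only: append.simps twirl_op_Cons twirl_op_Nil kron_unit_left kron_unit_right)
qed (simp add: kron_assoc)

lemma twirl_op_carrier:
  "set Ps \<subseteq> paulis n \<Longrightarrow>
   twirl_op Ps \<in> carrier_mat ((sysdim n * sysdim n) ^ length Ps) ((sysdim n * sysdim n) ^ length Ps)"
proof (induction Ps)
  case (Cons P Ps)
  then have "P \<in> carrier_mat (sysdim n) (sysdim n)" by (simp add: paulis_carrier)
  with Cons show ?case by (simp add: kron_carrier_mat)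
qed simp

lemma hermitian_twirl_op: "set Ps \<subseteq> paulis n \<Longrightarrow> hermitian (twirl_op Ps)"
proof (induction Ps)
  case (Cons P Ps)
  then have Ps: "set Ps \<subseteq> paulis n" and P: "P \<in> carrier_mat (sysdim n) (sysdim n)" "hermitian P"
    using paulis_carrier hermitian_paulis by auto
  show ?case
    using hermitian_kron[OF kron_carrier_mat[OF P(1) P(1)] twirl_op_carrier[OF Ps]
        hermitian_kron[OF P(1) P(1) P(2) P(2)] Cons.IH[OF Ps]]
    by simp
qed (simp add: hermitian_one_mat)

lemma set_map2_pauli_mult:
  assumes "set Qs \<subseteq> paulis n" "set Ps \<subseteq> paulis n"
  shows "set (map2 (pauli_mult n) Qs Ps) \<subseteq> paulis n"
proof
  fix R assume "R \<in> set (map2 (pauli_mult n) Qs Ps)"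
  then obtain Q P where "(Q, P) \<in> set (zip Qs Ps)" "R = pauli_mult n Q P" by auto
  then show "R \<in> paulis n"
    using assms by (blast dest: set_zip_leftD set_zip_rightD intro: pauli_mult_in_paulis)
qed

text \<open>On each factor \<open>Q P = c R\<close> gives \<open>(Q \<otimes> Q) (P \<otimes> P) = c\<^sup>2 (R \<otimes> R)\<close>, and the phases of
  \<open>Q P\<close> and \<open>P Q\<close> are inverse to each other.\<close>

lemma twirl_op_mult:
  assumes "length Qs = length Ps" "set Qs \<subseteq> paulis n" "set Ps \<subseteq> paulis n"
  shows "\<exists>l l'. twirl_op Qs * twirl_op Ps = l \<cdot>\<^sub>m twirl_op (map2 (pauli_mult n) Qs Ps)
    \<and> twirl_op Ps * twirl_op Qs = l' \<cdot>\<^sub>m twirl_op (map2 (pauli_mult n) Qs Ps) \<and> l * l' = 1"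
  using assms
proof (induction Qs Ps rule: list_induct2)
  case Nil
  then show ?case by (intro exI[of _ 1]) simp
next
  case (Cons Q Qs P Ps)
  then have P: "P \<in> paulis n" and Q: "Q \<in> paulis n" by simp_all
  let ?R = "pauli_mult n Q P" and ?Rs = "map2 (pauli_mult n) Qs Ps"
  obtain l l' where l: "twirl_op Qs * twirl_op Ps = l \<cdot>\<^sub>m twirl_op ?Rs"
    "twirl_op Ps * twirl_op Qs = l' \<cdot>\<^sub>m twirl_op ?Rs" "l * l' = 1"
    using Cons by auto
  obtain c c' where c: "Q * P = c \<cdot>\<^sub>m ?R" "P * Q = c' \<cdot>\<^sub>m ?R" "c * c' = 1"
    using pauli_mult_proportional[OF P Q] by blast
  have cP: "P \<in> carrier_mat (sysdim n) (sysdim n)" and cQ: "Q \<in> carrier_mat (sysdim n) (sysdim n)"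
    using P Q by (simp_all add: paulis_carrier)
  have TQ: "twirl_op Qs \<in> carrier_mat ((sysdim n * sysdim n) ^ length Ps) ((sysdim n * sysdim n) ^ length Ps)"
    and TP: "twirl_op Ps \<in> carrier_mat ((sysdim n * sysdim n) ^ length Ps) ((sysdim n * sysdim n) ^ length Ps)"
    using Cons twirl_op_carrier[of Qs n] twirl_op_carrier[of Ps n] by simp_all
  have "twirl_op (Q # Qs) * twirl_op (P # Ps) = kron (kron (Q * P) (Q * P)) (twirl_op Qs * twirl_op Ps)"
    using kron_mult_kron[OF kron_carrier_mat[OF cQ cQ] TQ kron_carrier_mat[OF cP cP] TP]
      kron_mult_kron[OF cQ cQ cP cP] by simp
  also have "\<dots> = (c * c * l) \<cdot>\<^sub>m twirl_op (map2 (pauli_mult n) (Q # Qs) (P # Ps))"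
    by (simp add: c(1) l(1) kron_smult_left kron_smult_right smult_smult_mat mult_ac)
  finally have QP: "twirl_op (Q # Qs) * twirl_op (P # Ps) =
      (c * c * l) \<cdot>\<^sub>m twirl_op (map2 (pauli_mult n) (Q # Qs) (P # Ps))" .
  have "twirl_op (P # Ps) * twirl_op (Q # Qs) = kron (kron (P * Q) (P * Q)) (twirl_op Ps * twirl_op Qs)"
    using kron_mult_kron[OF kron_carrier_mat[OF cP cP] TP kron_carrier_mat[OF cQ cQ] TQ]
      kron_mult_kron[OF cP cP cQ cQ] by simp
  also have "\<dots> = (c' * c' * l') \<cdot>\<^sub>m twirl_op (map2 (pauli_mult n) (Q # Qs) (P # Ps))"
    by (simp add: c(2) l(2) kron_smult_left kron_smult_right smult_smult_mat mult_ac)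
  finally have PQ: "twirl_op (P # Ps) * twirl_op (Q # Qs) =
      (c' * c' * l') \<cdot>\<^sub>m twirl_op (map2 (pauli_mult n) (Q # Qs) (P # Ps))" .
  have "(c * c * l) * (c' * c' * l') = (c * c') * (c * c') * (l * l')"
    by (simp add: mult_ac)
  with QP PQ c(3) l(3) show ?case by (metis mult_1_right)
qed

lemma twirl_op_conj:
  assumes "length Qs = length Ps" "set Qs \<subseteq> paulis n" "set Ps \<subseteq> paulis n"
    and U: "U \<in> carrier_mat ((sysdim n * sysdim n) ^ length Ps) ((sysdim n * sysdim n) ^ length Ps)"
  shows "twirl_op Qs * (twirl_op Ps * U * twirl_op Ps) * twirl_op Qs =
    twirl_op (map2 (pauli_mult n) Qs Ps) * U * twirl_op (map2 (pauli_mult n) Qs Ps)"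
proof -
  let ?D = "(sysdim n * sysdim n) ^ length Ps"
  let ?Q = "twirl_op Qs" and ?P = "twirl_op Ps" and ?R = "twirl_op (map2 (pauli_mult n) Qs Ps)"
  have R: "?R \<in> carrier_mat ?D ?D"
    using twirl_op_carrier[OF set_map2_pauli_mult[OF assms(2,3)]] assms(1) by simp
  have Q: "?Q \<in> carrier_mat ?D ?D" and P: "?P \<in> carrier_mat ?D ?D"
    using assms twirl_op_carrier[of Qs n] twirl_op_carrier[of Ps n] by simp_all
  obtain l l' where l: "?Q * ?P = l \<cdot>\<^sub>m ?R" "?P * ?Q = l' \<cdot>\<^sub>m ?R" "l * l' = 1"
    using twirl_op_mult[OF assms(1-3)] by blast
  have "?Q * (?P * U * ?P) * ?Q = (?Q * ?P) * U * (?P * ?Q)"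
    using Q P U by (simp add: assoc_mult_mat[of _ ?D ?D _ ?D _ ?D])
  also have "\<dots> = (l * l') \<cdot>\<^sub>m (?R * U * ?R)"
    using R U by (simp add: l(1,2) mult_smult_assoc_mat[of _ ?D ?D] mult_smult_distrib[of _ ?D ?D]
        smult_smult_mat mult.commute)
  finally show ?thesis using l(3) by simp
qed

lemma bij_betw_map2_pauli_mult:
  assumes Qs: "set Qs \<subseteq> paulis n"
  shows "bij_betw (map2 (pauli_mult n) Qs) (pauli_lists n (length Qs)) (pauli_lists n (length Qs))"
proof -
  have into: "map2 (pauli_mult n) Qs ` pauli_lists n (length Qs) \<subseteq> pauli_lists n (length Qs)"
    using set_map2_pauli_mult[OF Qs] unfolding pauli_lists_def by (auto simp del: set_map)
  have inj: "inj_on (map2 (pauli_mult n) Qs) (pauli_lists n (length Qs))"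
  proof (rule inj_onI)
    fix Xs Ys assume Xs: "Xs \<in> pauli_lists n (length Qs)" and Ys: "Ys \<in> pauli_lists n (length Qs)"
      and eq: "map2 (pauli_mult n) Qs Xs = map2 (pauli_mult n) Qs Ys"
    show "Xs = Ys"
    proof (rule nth_equalityI)
      show "length Xs = length Ys" using Xs Ys by (simp add: pauli_lists_def)
      fix i assume i: "i < length Xs"
      then have "Qs ! i \<in> paulis n" "Xs ! i \<in> paulis n" "Ys ! i \<in> paulis n"
        using Qs Xs Ys by (auto simp: pauli_lists_def)
      moreover have "pauli_mult n (Qs ! i) (Xs ! i) = pauli_mult n (Qs ! i) (Ys ! i)"
        using arg_cong[OF eq, of "\<lambda>Rs. Rs ! i"] i Xs Ys by (simp add: pauli_lists_def)
      ultimately show "Xs ! i = Ys ! i" using inj_on_pauli_mult by (blast dest: inj_onD)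
    qed
  qed
  show ?thesis
    unfolding bij_betw_def using endo_inj_surj[OF finite_pauli_lists into inj] inj by blast
qed

text \<open>The twirl over \<open>m\<close> time steps; \<^const>\<open>pauli_twirl\<close> is the case \<open>m = Suc k\<close>, and varying \<open>m\<close>
  lets the causality proof peel off one time step at a time.\<close>

definition multi_twirl :: "nat \<Rightarrow> nat \<Rightarrow> complex mat \<Rightarrow> complex mat" where
  "multi_twirl n m U = mat_average ((sysdim n * sysdim n) ^ m) (pauli_lists n m)
     (\<lambda>Ps. twirl_op Ps * U * twirl_op Ps)"

lemma pauli_twirl_eq_multi_twirl: "pauli_twirl n k U = multi_twirl n (Suc k) U"
  unfolding pauli_twirl_def multi_twirl_def mat_average_def ptdim_def
  by (simp only: card_pauli_lists) (simp add: pauli_lists_def)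

lemma twirl_summand_carrier:
  "Ps \<in> pauli_lists n m \<Longrightarrow> U \<in> carrier_mat ((sysdim n * sysdim n) ^ m) ((sysdim n * sysdim n) ^ m) \<Longrightarrow>
   twirl_op Ps * U * twirl_op Ps \<in> carrier_mat ((sysdim n * sysdim n) ^ m) ((sysdim n * sysdim n) ^ m)"
  using twirl_op_carrier[of Ps n] by (auto simp: pauli_lists_def)

lemma multi_twirl_idem:
  assumes U: "U \<in> carrier_mat ((sysdim n * sysdim n) ^ m) ((sysdim n * sysdim n) ^ m)"
  shows "multi_twirl n m (multi_twirl n m U) = multi_twirl n m U"
proof -
  let ?D = "(sysdim n * sysdim n) ^ m" and ?f = "\<lambda>Ps. twirl_op Ps * U * twirl_op Ps"
  have "twirl_op Qs * multi_twirl n m U * twirl_op Qs = multi_twirl n m U"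
    if Qs: "Qs \<in> pauli_lists n m" for Qs
  proof -
    have Q: "twirl_op Qs \<in> carrier_mat ?D ?D" "set Qs \<subseteq> paulis n" "length Qs = m"
      using Qs twirl_op_carrier[of Qs n] by (auto simp: pauli_lists_def)
    have "twirl_op Qs * multi_twirl n m U * twirl_op Qs =
        mat_average ?D (pauli_lists n m) (\<lambda>Ps. twirl_op Qs * ?f Ps * twirl_op Qs)"
      unfolding multi_twirl_def using U by (intro mult_mat_average_mult Q twirl_summand_carrier)
    also have "\<dots> = mat_average ?D (pauli_lists n m) (\<lambda>Ps. ?f (map2 (pauli_mult n) Qs Ps))"
      using Q U by (intro mat_average_cong) (simp add: pauli_lists_def twirl_op_conj)
    also have "\<dots> = multi_twirl n m U"
      unfolding multi_twirl_def
      using mat_average_reindex[OF bij_betw_map2_pauli_mult[OF Q(2)], of ?D ?f] Q(3) by simp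
    finally show ?thesis .
  qed
  then show ?thesis
    unfolding multi_twirl_def[of n m "multi_twirl n m U"]
    by (intro mat_average_const finite_pauli_lists pauli_lists_nonempty) (simp_all add: multi_twirl_def mat_average_carrier)
qed

lemma psd_multi_twirl:
  assumes U: "U \<in> carrier_mat ((sysdim n * sysdim n) ^ m) ((sysdim n * sysdim n) ^ m)" "psd U"
  shows "psd (multi_twirl n m U)"
  unfolding multi_twirl_def
proof (intro psd_mat_average conjI)
  fix Ps assume Ps: "Ps \<in> pauli_lists n m"
  then have "set Ps \<subseteq> paulis n" "length Ps = m" by (simp_all add: pauli_lists_def)
  then have "twirl_op Ps \<in> carrier_mat ((sysdim n * sysdim n) ^ m) ((sysdim n * sysdim n) ^ m)"
    and "hermitian (twirl_op Ps)"
    using twirl_op_carrier[of Ps n] hermitian_twirl_op[of Ps n] by simp_all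
  then show "psd (twirl_op Ps * U * twirl_op Ps)"
    using U by (rule psd_hermitian_sandwich)
  show "twirl_op Ps * U * twirl_op Ps \<in> carrier_mat ((sysdim n * sysdim n) ^ m) ((sysdim n * sysdim n) ^ m)"
    using Ps U(1) by (rule twirl_summand_carrier)
qed

lemma ptrace_last_twirl_op_append:
  assumes Ps: "set Ps \<subseteq> paulis n" and P: "P \<in> paulis n"
    and V: "V \<in> carrier_mat ((sysdim n * sysdim n) ^ length Ps * sysdim n * sysdim n)
                             ((sysdim n * sysdim n) ^ length Ps * sysdim n * sysdim n)"
    and B: "B \<in> carrier_mat ((sysdim n * sysdim n) ^ length Ps) ((sysdim n * sysdim n) ^ length Ps)"
    and V_B: "ptrace_last (sysdim n) V = kron B (1\<^sub>m (sysdim n))"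
  shows "ptrace_last (sysdim n) (twirl_op (Ps @ [P]) * V * twirl_op (Ps @ [P])) =
    kron (twirl_op Ps * B * twirl_op Ps) (1\<^sub>m (sysdim n))"
proof -
  let ?s = "sysdim n" and ?W = "twirl_op Ps"
  have s: "0 < ?s" by (simp add: sysdim_def)
  have W: "?W \<in> carrier_mat ((?s * ?s) ^ length Ps) ((?s * ?s) ^ length Ps)"
    using twirl_op_carrier[OF Ps] .
  have cP: "P \<in> carrier_mat ?s ?s" using paulis_carrier[OF P] .
  have "ptrace_last ?s (twirl_op (Ps @ [P]) * V * twirl_op (Ps @ [P])) =
      kron ?W P * kron B (1\<^sub>m ?s) * kron ?W P"
    unfolding twirl_op_append_single V_B[symmetric]
    by (rule ptrace_last_sandwich[OF s kron_carrier_mat[OF W cP] cP paulis_square[OF P] V])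
  also have "\<dots> = kron (?W * B * ?W) (P * 1\<^sub>m ?s * P)"
    using kron_mult_kron[OF W cP B one_carrier_mat] kron_mult_kron[OF mult_carrier_mat[OF W B] _ W cP] cP
    by simp
  also have "P * 1\<^sub>m ?s * P = 1\<^sub>m ?s"
    using cP paulis_square[OF P] by simp
  finally show ?thesis .
qed

lemma ptrace_last_multi_twirl:
  assumes V: "V \<in> carrier_mat ((sysdim n * sysdim n) ^ Suc j) ((sysdim n * sysdim n) ^ Suc j)"
    and B: "B \<in> carrier_mat ((sysdim n * sysdim n) ^ j) ((sysdim n * sysdim n) ^ j)"
    and V_B: "ptrace_last (sysdim n) V = kron B (1\<^sub>m (sysdim n))"
  shows "ptrace_last (sysdim n) (multi_twirl n (Suc j) V) = kron (multi_twirl n j B) (1\<^sub>m (sysdim n))"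
proof -
  let ?s = "sysdim n" and ?D = "(sysdim n * sysdim n) ^ j"
  let ?f = "\<lambda>Ps. twirl_op Ps * V * twirl_op Ps" and ?g = "\<lambda>Ps. twirl_op Ps * B * twirl_op Ps"
  have s: "0 < ?s" by (simp add: sysdim_def)
  have dim: "(?s * ?s) ^ Suc j = ?D * ?s * ?s" by (simp add: mult_ac)
  have V': "V \<in> carrier_mat (?D * ?s * ?s) (?D * ?s * ?s)" using V unfolding dim .
  have "ptrace_last ?s (multi_twirl n (Suc j) V) =
      mat_average (?D * ?s) (pauli_lists n (Suc j)) (\<lambda>Ps. ptrace_last ?s (?f Ps))"
    unfolding multi_twirl_def dim
    using twirl_summand_carrier[of _ n "Suc j" V] V unfolding dim
    by (intro ptrace_last_mat_average s) simp
  also have "\<dots> = mat_average (?D * ?s) (pauli_lists n j \<times> paulis n)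
      (\<lambda>(Ps, P). ptrace_last ?s (?f (Ps @ [P])))"
    using mat_average_reindex[OF bij_betw_append_pauli_lists, of "?D * ?s" n j
        "\<lambda>Ps. ptrace_last ?s (?f Ps)"]
    by (simp add: case_prod_unfold)
  also have "\<dots> = mat_average (?D * ?s) (pauli_lists n j \<times> paulis n)
      (\<lambda>(Ps, P). kron (?g Ps) (1\<^sub>m ?s))"
    using V' B V_B by (intro mat_average_cong) (auto simp: pauli_lists_def ptrace_last_twirl_op_append)
  also have "\<dots> = mat_average (?D * ?s) (pauli_lists n j) (\<lambda>Ps. kron (?g Ps) (1\<^sub>m ?s))"
    by (rule mat_average_Times_fst[OF finite_pauli_lists finite_paulis paulis_nonempty])
  also have "\<dots> = kron (multi_twirl n j B) (1\<^sub>m ?s)"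
    unfolding multi_twirl_def using B
    by (intro kron_mat_average[symmetric] one_carrier_mat twirl_summand_carrier)
  finally show ?thesis .
qed

lemma multi_twirl_0_one: "multi_twirl n 0 (1\<^sub>m 1) = 1\<^sub>m 1"
  unfolding multi_twirl_def pauli_lists_0 by (rule mat_average_const) simp_all

lemma causal_pauli_twirl:
  assumes "causal n k U"
  shows "causal n k (pauli_twirl n k U)"
proof -
  obtain Ups where U: "Ups k = U" and carrier: "\<forall>j\<le>k. Ups j \<in> carrier_mat (ptdim n j) (ptdim n j)"
    and base: "ptrace_last (sysdim n) (Ups 0) = 1\<^sub>m (sysdim n)"
    and step: "\<forall>j. 1 \<le> j \<and> j \<le> k \<longrightarrow> ptrace_last (sysdim n) (Ups j) = kron (Ups (j - 1)) (1\<^sub>m (sysdim n))"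
    using assms unfolding causal_def by blast
  have carrier': "Ups j \<in> carrier_mat ((sysdim n * sysdim n) ^ Suc j) ((sysdim n * sysdim n) ^ Suc j)"
    if "j \<le> k" for j
    using carrier that unfolding ptdim_def by blast
  show ?thesis
    unfolding causal_def
  proof (intro exI[of _ "\<lambda>j. pauli_twirl n j (Ups j)"] conjI allI impI)
    show "pauli_twirl n k (Ups k) = pauli_twirl n k U" by (simp only: U)
    show "pauli_twirl n j (Ups j) \<in> carrier_mat (ptdim n j) (ptdim n j)" for j
      unfolding pauli_twirl_def by simp
    have one: "1\<^sub>m 1 \<in> carrier_mat ((sysdim n * sysdim n) ^ 0) ((sysdim n * sysdim n) ^ 0)"
      by simp
    have "ptrace_last (sysdim n) (Ups 0) = kron (1\<^sub>m 1) (1\<^sub>m (sysdim n))"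
      using base by (simp only: kron_unit_left)
    from ptrace_last_multi_twirl[OF carrier'[OF le0] one this]
    show "ptrace_last (sysdim n) (pauli_twirl n 0 (Ups 0)) = 1\<^sub>m (sysdim n)"
      by (simp only: pauli_twirl_eq_multi_twirl multi_twirl_0_one kron_unit_left)
  next
    fix j assume j: "1 \<le> j \<and> j \<le> k"
    then obtain i where i: "j = Suc i" by (cases j) auto
    have "Ups j \<in> carrier_mat ((sysdim n * sysdim n) ^ Suc j) ((sysdim n * sysdim n) ^ Suc j)"
      using carrier' j by simp
    moreover have "Ups i \<in> carrier_mat ((sysdim n * sysdim n) ^ j) ((sysdim n * sysdim n) ^ j)"
      using carrier'[of i] i j by simp
    moreover have "ptrace_last (sysdim n) (Ups j) = kron (Ups i) (1\<^sub>m (sysdim n))"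
      using step i j by simp
    ultimately show "ptrace_last (sysdim n) (pauli_twirl n j (Ups j)) =
        kron (pauli_twirl n (j - 1) (Ups (j - 1))) (1\<^sub>m (sysdim n))"
      using ptrace_last_multi_twirl by (simp add: i pauli_twirl_eq_multi_twirl)
  qed
qed

theorem proposition1:
  fixes n k :: nat
  shows "(\<forall>U. valid_process_tensor n k U \<longrightarrow> valid_process_tensor n k (pauli_twirl n k U))
    \<and> (\<forall>U \<in> carrier_mat (ptdim n k) (ptdim n k).
          pauli_twirl n k (pauli_twirl n k U) = pauli_twirl n k U)
    \<and> (\<forall>U. causal n k U \<longrightarrow> causal n k (pauli_twirl n k U))"
proof (intro conjI allI impI ballI)
  fix U assume "valid_process_tensor n k U"
  then have "psd U" and causal: "causal n k U" and "U \<in> carrier_mat (ptdim n k) (ptdim n k)"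
    unfolding valid_process_tensor_def causal_def by auto
  then have "psd (pauli_twirl n k U)"
    unfolding ptdim_def pauli_twirl_eq_multi_twirl by (intro psd_multi_twirl)
  with causal_pauli_twirl[OF causal] show "valid_process_tensor n k (pauli_twirl n k U)"
    unfolding valid_process_tensor_def by simp
next
  fix U :: "complex mat" assume "U \<in> carrier_mat (ptdim n k) (ptdim n k)"
  then show "pauli_twirl n k (pauli_twirl n k U) = pauli_twirl n k U"
    unfolding ptdim_def pauli_twirl_eq_multi_twirl by (rule multi_twirl_idem)
qed (rule causal_pauli_twirl)

end
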